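(* Let $D$ and $D'=D+A$ be generalized connections on $E$, with $A\in \Gamma (E^*\otimes \mathfrak{so}(E))$, and let $D^S$ be an $E$-connection on $S$ compatible with $D$. Then: (i) The torsions $T'$ and $T$ of $D'$ and $D$ are related by $T'= T + \alpha$, where $\alpha \in \Gamma (\wedge^3E^* )$ is given by $\alpha (u,v,w) = \sum_{(u,v,w)\; \mathrm{cyclic}} \langle A_uv,w\rangle$. (ii) The $E$-connection $(D^S)' := D^S -\frac12 A$ is compatible with $D'$. Here $A$ is considered as a map $E\rightarrow \wedge^2E^*\cong \wedge ^2E\subset \mathrm{Cl}(E)$, so that $A_e$ acts by Clifford multiplication on $S$ for all $e\in E$. (iii) The Dirac operators $D\!\!\!\!/^{\,S}$ and $(D\!\!\!\!/^{\,S})'$ associated with $(D,D^S)$ and $(D',(D^S)')$ are related by $(D\!\!\!\!/^{\,S})' = D\!\!\!\!/^{\,S} - \frac14 \gamma_\alpha -\frac14 \gamma_{v_A}$, where $v_A = \mathrm{tr}_{\langle \cdot ,\cdot \rangle}A= \sum_i A_{e_i}\tilde{e}_i \in \Gamma (E)$. (iv) The operators $d\!\!\!/_{S}= D\!\!\!\!/^{\,S}+\frac{1}{4} \gamma_{T}$ and $d\!\!\!/^{\,\prime}_{S}= (D\!\!\!\!/^{\,S})' +\frac{1}{4} \gamma_{T'}$ are related by $d\!\!\!/^{\,\prime}_{S}= d\!\!\!/_{S} -\frac{1}{4} \gamma_{v_{A}}$.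
   Context: Let $E\to M$ be a regular Courant algebroid (anchor $\pi$ of constant rank, Dorfman bracket $[\cdot,\cdot]$) with scalar product $\langle\cdot,\cdot\rangle$ of neutral signature, and $S$ a bundle of irreducible $\mathrm{Cl}(E)$-modules (Clifford relation $e^2=\langle e,e\rangle$) with action $a\mapsto\gamma_a$. A generalized connection is an $\mathbb R$-linear $D:\Gamma(E)\to\Gamma(E^*\otimes E)$ with $D_e(fv)=\pi(e)(f)v+fD_ev$, compatible with $\langle\cdot,\cdot\rangle$; its torsion $T(u,v,w)=\langle D_uv-D_vu-[u,v]+(Du)^*v,w\rangle$ is a 3-form, identified with an element of $\wedge^3E\subset\mathrm{Cl}(E)$. $E$ is identified with $E^*$ via $\langle\cdot,\cdot\rangle$, and $\wedge^2E\subset\mathrm{End}\,E$ via $(e_1\wedge e_2)(e_3)=\langle e_1,e_3\rangle e_2-\langle e_2,e_3\rangle e_1$. An $E$-connection $D^S$ on $S$ is compatible with $D$ if $D^S_e(as)=(D_ea)s+aD^S_es$. The Dirac operator is $D\!\!\!\!/^{\,S}=\frac12\sum_i\tilde e_iD^S_{e_i}$, with $(e_i)$ a local frame of $E$ and $(\tilde e_i)$ the dual frame, $\langle e_i,\tilde e_j\rangle=\delta_{ij}$. *)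

theory Defs
  imports Main "HOL.Real_Vector_Spaces"
begin

text \<open>The type 'r plays the role of the
commutative real algebra of smooth functions on M, 'e the sections of E,
's the sections of the spinor bundle S.\<close>

definition module_ax :: "('r::comm_ring_1 \<Rightarrow> 'a::ab_group_add \<Rightarrow> 'a) \<Rightarrow> bool" where
  "module_ax sm \<longleftrightarrow>
     (\<forall>f x y. sm f (x + y) = sm f x + sm f y) \<and>
     (\<forall>f g x. sm (f + g) x = sm f x + sm g x) \<and>
     (\<forall>f g x. sm (f * g) x = sm f (sm g x)) \<and>
     (\<forall>x. sm 1 x = x)"

definition anchor_ax ::
  "('r::{comm_ring_1,real_algebra_1} \<Rightarrow> 'e::ab_group_add \<Rightarrow> 'e) \<Rightarrow> ('e \<Rightarrow> 'r \<Rightarrow> 'r) \<Rightarrow> bool" where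
  "anchor_ax smE anc \<longleftrightarrow>
     (\<forall>e f g. anc e (f * g) = anc e f * g + f * anc e g) \<and>
     (\<forall>e f g. anc e (f + g) = anc e f + anc e g) \<and>
     (\<forall>e c f. anc e (of_real c * f) = of_real c * anc e f) \<and>
     (\<forall>e1 e2 f. anc (e1 + e2) f = anc e1 f + anc e2 f) \<and>
     (\<forall>h e f. anc (smE h e) f = h * anc e f)"

definition scalar_product_ax ::
  "('r::comm_ring_1 \<Rightarrow> 'e::ab_group_add \<Rightarrow> 'e) \<Rightarrow> ('e \<Rightarrow> 'e \<Rightarrow> 'r) \<Rightarrow> bool" where
  "scalar_product_ax smE ip \<longleftrightarrow>
     (\<forall>u v. ip u v = ip v u) \<and>
     (\<forall>u1 u2 v. ip (u1 + u2) v = ip u1 v + ip u2 v) \<and>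
     (\<forall>f u v. ip (smE f u) v = f * ip u v) \<and>
     (\<forall>u. (\<forall>v. ip u v = 0) \<longrightarrow> u = 0)"

text \<open>Courant algebroid in terms of the Dorfman bracket.\<close>
definition courant_algebroid ::
  "('r::{comm_ring_1,real_algebra_1} \<Rightarrow> 'e::ab_group_add \<Rightarrow> 'e) \<Rightarrow> ('e \<Rightarrow> 'r \<Rightarrow> 'r)
   \<Rightarrow> ('e \<Rightarrow> 'e \<Rightarrow> 'r) \<Rightarrow> ('e \<Rightarrow> 'e \<Rightarrow> 'e) \<Rightarrow> bool" where
  "courant_algebroid smE anc ip br \<longleftrightarrow>
     module_ax smE \<and> anchor_ax smE anc \<and> scalar_product_ax smE ip \<and>
     (\<forall>u1 u2 v. br (u1 + u2) v = br u1 v + br u2 v) \<and>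
     (\<forall>u v1 v2. br u (v1 + v2) = br u v1 + br u v2) \<and>
     (\<forall>u f v. br u (smE f v) = smE (anc u f) v + smE f (br u v)) \<and>
     (\<forall>u v w. br u (br v w) = br (br u v) w + br v (br u w)) \<and>
     (\<forall>u v w. anc u (ip v w) = ip (br u v) w + ip v (br u w)) \<and>
     (\<forall>u w. ip (br u u) w = of_real (1/2) * anc w (ip u u))"

definition dual_system ::
  "('r::comm_ring_1 \<Rightarrow> 'e::ab_group_add \<Rightarrow> 'e) \<Rightarrow> ('e \<Rightarrow> 'e \<Rightarrow> 'r) \<Rightarrow> 'i set
   \<Rightarrow> ('i \<Rightarrow> 'e) \<Rightarrow> ('i \<Rightarrow> 'e) \<Rightarrow> bool" where
  "dual_system smE ip I fr dfr \<longleftrightarrow>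
     finite I \<and> (\<forall>x. x = (\<Sum>i\<in>I. smE (ip (fr i) x) (dfr i)))"

definition clifford_module ::
  "('r::comm_ring_1 \<Rightarrow> 'e::ab_group_add \<Rightarrow> 'e) \<Rightarrow> ('e \<Rightarrow> 'e \<Rightarrow> 'r)
   \<Rightarrow> ('r \<Rightarrow> 's::ab_group_add \<Rightarrow> 's) \<Rightarrow> ('e \<Rightarrow> 's \<Rightarrow> 's) \<Rightarrow> bool" where
  "clifford_module smE ip smS gam \<longleftrightarrow>
     module_ax smS \<and>
     (\<forall>e1 e2 s. gam (e1 + e2) s = gam e1 s + gam e2 s) \<and>
     (\<forall>e s1 s2. gam e (s1 + s2) = gam e s1 + gam e s2) \<and>
     (\<forall>f e s. gam (smE f e) s = smS f (gam e s)) \<and>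
     (\<forall>f e s. gam e (smS f s) = smS f (gam e s)) \<and>
     (\<forall>e s. gam e (gam e s) = smS (ip e e) s)"

definition gen_connection ::
  "('r::comm_ring_1 \<Rightarrow> 'e::ab_group_add \<Rightarrow> 'e) \<Rightarrow> ('e \<Rightarrow> 'r \<Rightarrow> 'r) \<Rightarrow> ('e \<Rightarrow> 'e \<Rightarrow> 'r)
   \<Rightarrow> ('e \<Rightarrow> 'e \<Rightarrow> 'e) \<Rightarrow> bool" where
  "gen_connection smE anc ip D \<longleftrightarrow>
     (\<forall>u1 u2 v. D (u1 + u2) v = D u1 v + D u2 v) \<and>
     (\<forall>f u v. D (smE f u) v = smE f (D u v)) \<and>
     (\<forall>u v1 v2. D u (v1 + v2) = D u v1 + D u v2) \<and>
     (\<forall>u f v. D u (smE f v) = smE (anc u f) v + smE f (D u v)) \<and>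
     (\<forall>u v w. anc u (ip v w) = ip (D u v) w + ip v (D u w))"

definition so_valued ::
  "('r::comm_ring_1 \<Rightarrow> 'e::ab_group_add \<Rightarrow> 'e) \<Rightarrow> ('e \<Rightarrow> 'e \<Rightarrow> 'r) \<Rightarrow> ('e \<Rightarrow> 'e \<Rightarrow> 'e) \<Rightarrow> bool" where
  "so_valued smE ip A \<longleftrightarrow>
     (\<forall>u1 u2 v. A (u1 + u2) v = A u1 v + A u2 v) \<and>
     (\<forall>f u v. A (smE f u) v = smE f (A u v)) \<and>
     (\<forall>u v1 v2. A u (v1 + v2) = A u v1 + A u v2) \<and>
     (\<forall>u f v. A u (smE f v) = smE f (A u v)) \<and>
     (\<forall>u v w. ip (A u v) w + ip v (A u w) = 0)"

definition E_connection ::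
  "('r::comm_ring_1 \<Rightarrow> 'e::ab_group_add \<Rightarrow> 'e) \<Rightarrow> ('e \<Rightarrow> 'r \<Rightarrow> 'r)
   \<Rightarrow> ('r \<Rightarrow> 's::ab_group_add \<Rightarrow> 's) \<Rightarrow> ('e \<Rightarrow> 's \<Rightarrow> 's) \<Rightarrow> bool" where
  "E_connection smE anc smS DS \<longleftrightarrow>
     (\<forall>e1 e2 s. DS (e1 + e2) s = DS e1 s + DS e2 s) \<and>
     (\<forall>f e s. DS (smE f e) s = smS f (DS e s)) \<and>
     (\<forall>e s1 s2. DS e (s1 + s2) = DS e s1 + DS e s2) \<and>
     (\<forall>e f s. DS e (smS f s) = smS (anc e f) s + smS f (DS e s))"

definition compatible ::
  "('e \<Rightarrow> 's \<Rightarrow> 's::ab_group_add) \<Rightarrow> ('e \<Rightarrow> 'e \<Rightarrow> 'e) \<Rightarrow> ('e \<Rightarrow> 's \<Rightarrow> 's) \<Rightarrow> bool" where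
  "compatible gam D DS \<longleftrightarrow>
     (\<forall>e a s. DS e (gam a s) = gam (D e a) s + gam a (DS e s))"

text \<open>Torsion T(u,v,w) = <D_u v - D_v u - [u,v] + (Du)^* v, w>,
  where <(Du)^* v, w> = <v, D_w u>.\<close>
definition torsion ::
  "('e::ab_group_add \<Rightarrow> 'e \<Rightarrow> 'r::comm_ring_1) \<Rightarrow> ('e \<Rightarrow> 'e \<Rightarrow> 'e) \<Rightarrow> ('e \<Rightarrow> 'e \<Rightarrow> 'e)
   \<Rightarrow> 'e \<Rightarrow> 'e \<Rightarrow> 'e \<Rightarrow> 'r" where
  "torsion ip br D u v w = ip (D u v - D v u - br u v) w + ip v (D w u)"

definition cyclic_form ::
  "('e \<Rightarrow> 'e \<Rightarrow> 'r::comm_ring_1) \<Rightarrow> ('e \<Rightarrow> 'e \<Rightarrow> 'e) \<Rightarrow> 'e \<Rightarrow> 'e \<Rightarrow> 'e \<Rightarrow> 'r" where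
  "cyclic_form ip A u v w = ip (A u v) w + ip (A v w) u + ip (A w u) v"

text \<open>Clifford action of a 3-form phi, identified with
  (1/6) sum phi(e_i,e_j,e_k) e~_i e~_j e~_k in wedge^3 E in Cl(E).\<close>
definition cl3 ::
  "('r::{comm_ring_1,real_algebra_1} \<Rightarrow> 's::ab_group_add \<Rightarrow> 's) \<Rightarrow> ('e \<Rightarrow> 's \<Rightarrow> 's) \<Rightarrow> 'i set
   \<Rightarrow> ('i \<Rightarrow> 'e) \<Rightarrow> ('i \<Rightarrow> 'e) \<Rightarrow> ('e \<Rightarrow> 'e \<Rightarrow> 'e \<Rightarrow> 'r) \<Rightarrow> 's \<Rightarrow> 's" where
  "cl3 smS gam I fr dfr phi s = smS (of_real (1/6))
     (\<Sum>i\<in>I. \<Sum>j\<in>I. \<Sum>k\<in>I.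
        smS (phi (fr i) (fr j) (fr k)) (gam (dfr i) (gam (dfr j) (gam (dfr k) s))))"

text \<open>Clifford action of a skew endomorphism B in so(E) = wedge^2 E, using
  (e1 wedge e2)(e3) = <e1,e3> e2 - <e2,e3> e1: B = (1/2) sum_i e~_i wedge B e_i,
  and e1 wedge e2 corresponds to (1/2)(e1 e2 - e2 e1) in Cl(E).\<close>
definition cl2 ::
  "('r::{comm_ring_1,real_algebra_1} \<Rightarrow> 's::ab_group_add \<Rightarrow> 's) \<Rightarrow> ('e \<Rightarrow> 's \<Rightarrow> 's) \<Rightarrow> 'i set
   \<Rightarrow> ('i \<Rightarrow> 'e) \<Rightarrow> ('i \<Rightarrow> 'e) \<Rightarrow> ('e \<Rightarrow> 'e) \<Rightarrow> 's \<Rightarrow> 's" where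
  "cl2 smS gam I fr dfr B s = smS (of_real (1/4))
     (\<Sum>i\<in>I. gam (dfr i) (gam (B (fr i)) s) - gam (B (fr i)) (gam (dfr i) s))"

definition dirac ::
  "('r::{comm_ring_1,real_algebra_1} \<Rightarrow> 's::ab_group_add \<Rightarrow> 's) \<Rightarrow> ('e \<Rightarrow> 's \<Rightarrow> 's) \<Rightarrow> 'i set
   \<Rightarrow> ('i \<Rightarrow> 'e) \<Rightarrow> ('i \<Rightarrow> 'e) \<Rightarrow> ('e \<Rightarrow> 's \<Rightarrow> 's) \<Rightarrow> 's \<Rightarrow> 's" where
  "dirac smS gam I fr dfr DS s = smS (of_real (1/2)) (\<Sum>i\<in>I. gam (dfr i) (DS (fr i) s))"

definition trace_A :: "'i set \<Rightarrow> ('i \<Rightarrow> 'e) \<Rightarrow> ('i \<Rightarrow> 'e) \<Rightarrow> ('e \<Rightarrow> 'e \<Rightarrow> 'e::ab_group_add) \<Rightarrow> 'e" where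
  "trace_A I fr dfr A = (\<Sum>i\<in>I. A (fr i) (dfr i))"

end

theory Submission
  imports Defs
begin

text \<open>Everything follows from the Clifford relation \<open>x y + y x = 2 <x,y>\<close>, the
expansion of vectors in the frame \<open>e\<^sub>i\<close> and its dual \<open>e~\<^sub>i\<close>, and the vanishing of
the trace of a skew endomorphism.  For skew \<open>B\<close> the Clifford element \<open>cl2 B\<close>
satisfies \<open>[cl2 B, \<gamma>\<^sub>a] = -2 \<gamma>\<^bsub>B a\<^esub>\<close>, which gives (ii).  For (iii) put
\<open>X = \<Sum>\<^sub>i\<^sub>j e~\<^sub>i e~\<^sub>j (A\<^bsub>e_i\<^esub> e\<^sub>j)\<close>.  Moving \<open>e~\<^sub>j\<close> across \<open>A\<^bsub>e_i\<^esub> e\<^sub>j\<close> only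
produces a trace, so \<open>\<Sum>\<^sub>i e~\<^sub>i cl2 (A\<^bsub>e_i\<^esub>) = X/2\<close>; in the same way the three
cyclic terms of \<open>6 \<gamma>\<^sub>\<alpha>\<close> turn out to be \<open>X\<close>, \<open>X - 2 \<gamma>\<^bsub>v_A\<^esub>\<close> and \<open>X - 4 \<gamma>\<^bsub>v_A\<^esub>\<close>.
(i) is a direct computation and (iv) combines (i) with (iii).\<close>

lemma of_real_half_add_half: "of_real (1/2) + of_real (1/2) = (1::'a::real_algebra_1)"
  by (simp add: of_real_add [symmetric])

lemma double_eq_0_imp_eq_0:
  fixes t :: "'a::real_algebra_1"
  assumes "t + t = 0"
  shows "t = 0"
proof -
  have "t = (of_real (1/2) + of_real (1/2)) * t" by (simp add: of_real_half_add_half)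
  also have "\<dots> = of_real (1/2) * (t + t)" by (simp add: algebra_simps)
  finally show ?thesis using assms by simp
qed

lemma torsion_add_so_valued:
  assumes "scalar_product_ax smE ip" and "so_valued smE ip A"
  shows "torsion ip br (\<lambda>u v. D u v + A u v) u v w = torsion ip br D u v w + cyclic_form ip A u v w"
proof -
  have ip_add: "ip (x + y) z = ip x z + ip y z" "ip z (x + y) = ip z x + ip z y"
    and ip_sym: "ip x z = ip z x" for x y z
    using assms(1) unfolding scalar_product_ax_def by metis+
  have ip_diff: "ip (x - y) z = ip x z - ip y z" for x y z
    using ip_add(1) [of "x - y" y z] by simp
  have "ip (A v u) w = - ip (A v w) u"
    using assms(2) ip_sym [of u] unfolding so_valued_def by (metis add_eq_0_iff2)
  then show ?thesis
    unfolding torsion_def cyclic_form_def by (simp add: ip_add ip_diff ip_sym [of v "A w u"] algebra_simps)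
qed

lemma cl3_add:
  assumes "module_ax smS"
  shows "cl3 smS gam I fr dfr (\<lambda>u v w. p u v w + q u v w) s
    = cl3 smS gam I fr dfr p s + cl3 smS gam I fr dfr q s"
  using assms unfolding cl3_def module_ax_def by (simp add: sum.distrib)

definition skew_endo ::
  "('r::comm_ring_1 \<Rightarrow> 'e::ab_group_add \<Rightarrow> 'e) \<Rightarrow> ('e \<Rightarrow> 'e \<Rightarrow> 'r) \<Rightarrow> ('e \<Rightarrow> 'e) \<Rightarrow> bool" where
  "skew_endo smE ip B \<longleftrightarrow>
     (\<forall>v1 v2. B (v1 + v2) = B v1 + B v2) \<and>
     (\<forall>f v. B (smE f v) = smE f (B v)) \<and>
     (\<forall>v w. ip (B v) w + ip v (B w) = 0)"

lemma so_valued_imp_skew_endo: "so_valued smE ip A \<Longrightarrow> skew_endo smE ip (A u)"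
  unfolding so_valued_def skew_endo_def by blast

locale clifford_frame =
  fixes smE :: "'r::{comm_ring_1,real_algebra_1} \<Rightarrow> 'e::ab_group_add \<Rightarrow> 'e"
    and ip :: "'e \<Rightarrow> 'e \<Rightarrow> 'r"
    and smS :: "'r \<Rightarrow> 's::ab_group_add \<Rightarrow> 's"
    and gam :: "'e \<Rightarrow> 's \<Rightarrow> 's"
    and I :: "'i set" and fr dfr :: "'i \<Rightarrow> 'e"
  assumes scalar_product: "scalar_product_ax smE ip"
    and clifford: "clifford_module smE ip smS gam"
    and frame: "dual_system smE ip I fr dfr"
begin

lemma ip_sym: "ip u v = ip v u"
  and ip_add_left: "ip (u1 + u2) v = ip u1 v + ip u2 v"
  and ip_scale_left: "ip (smE f u) v = f * ip u v"
  and ip_nondegenerate: "(\<And>v. ip u v = 0) \<Longrightarrow> u = 0"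
  using scalar_product unfolding scalar_product_ax_def by blast+

lemma ip_add_right: "ip v (u1 + u2) = ip v u1 + ip v u2"
  and ip_scale_right: "ip v (smE f u) = f * ip v u"
  using ip_add_left ip_scale_left ip_sym by metis+

lemma smS_add_right: "smS f (x + y) = smS f x + smS f y"
  and smS_add_left: "smS (f + g) x = smS f x + smS g x"
  and smS_mult: "smS (f * g) x = smS f (smS g x)"
  and smS_one: "smS 1 x = x"
  using clifford unfolding clifford_module_def module_ax_def by simp_all

lemma smS_commute: "smS f (smS g x) = smS g (smS f x)"
  by (metis smS_mult mult.commute)

lemma smS_of_real_add: "smS (of_real a) x + smS (of_real b) x = smS (of_real (a + b)) x"
  by (simp add: smS_add_left of_real_add)

lemma smS_half_double: "smS (of_real (1/2)) (x + x) = x"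
  by (simp add: smS_add_right smS_of_real_add smS_one)

lemma gam_add_left: "gam (e1 + e2) s = gam e1 s + gam e2 s"
  and gam_add_right: "gam e (s1 + s2) = gam e s1 + gam e s2"
  and gam_scale_left: "gam (smE f e) s = smS f (gam e s)"
  and gam_scale_right: "gam e (smS f s) = smS f (gam e s)"
  and gam_square: "gam e (gam e s) = smS (ip e e) s"
  using clifford unfolding clifford_module_def by blast+

lemma frame_expansion: "x = (\<Sum>i\<in>I. smE (ip (fr i) x) (dfr i))"
  using frame by (simp add: dual_system_def)

sublocale ip_left: additive "\<lambda>u. ip u v" by unfold_locales (rule ip_add_left)
sublocale ip_right: additive "ip v" by unfold_locales (rule ip_add_right)
sublocale smS_right: additive "smS f" by unfold_locales (rule smS_add_right)
sublocale smS_left: additive "\<lambda>f. smS f x" by unfold_locales (rule smS_add_left)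
sublocale gam_left: additive "\<lambda>e. gam e s" by unfold_locales (rule gam_add_left)
sublocale gam_right: additive "gam e" by unfold_locales (rule gam_add_right)

lemmas multilinear_simps =
  ip_left.zero ip_left.minus ip_left.diff ip_left.sum
  ip_right.zero ip_right.minus ip_right.diff ip_right.sum
  smS_right.zero smS_right.minus smS_right.diff smS_right.sum
  smS_left.zero smS_left.minus smS_left.diff smS_left.sum
  gam_left.zero gam_left.minus gam_left.diff gam_left.sum
  gam_right.zero gam_right.minus gam_right.diff gam_right.sum
  ip_add_left ip_add_right ip_scale_left ip_scale_right smS_add_left smS_add_right
  gam_add_left gam_add_right gam_scale_left gam_scale_right

lemma dual_frame_expansion: "x = (\<Sum>i\<in>I. smE (ip (dfr i) x) (fr i))"
proof -
  have "(\<Sum>i\<in>I. smE (ip (dfr i) x) (fr i)) - x = 0"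
  proof (rule ip_nondegenerate)
    fix v
    have "ip x v = ip x (\<Sum>i\<in>I. smE (ip (fr i) v) (dfr i))"
      using frame_expansion [of v] by simp
    then show "ip ((\<Sum>i\<in>I. smE (ip (dfr i) x) (fr i)) - x) v = 0"
      by (simp add: multilinear_simps ip_sym [of x] mult.commute)
  qed
  then show ?thesis by simp
qed

lemma gam_frame_expansion: "(\<Sum>k\<in>I. smS (ip (fr k) x) (gam (dfr k) s)) = gam x s"
  using arg_cong [OF frame_expansion, of "\<lambda>z. gam z s" x]
  by (simp add: multilinear_simps)

lemma gam_frame_expansion_under:
  assumes "\<And>t1 t2. L (t1 + t2) = L t1 + L t2" and "\<And>f t. L (smS f t) = smS f (L t)"
  shows "(\<Sum>k\<in>I. smS (ip x (fr k)) (L (gam (dfr k) t))) = L (gam x t)"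
proof -
  interpret L: additive L by unfold_locales (rule assms(1))
  have "L (gam x t) = L (\<Sum>k\<in>I. smS (ip x (fr k)) (gam (dfr k) t))"
    using gam_frame_expansion [of x t] by (simp add: ip_sym)
  then show ?thesis by (simp add: L.sum assms(2))
qed

lemma gam_swap: "gam x (gam y s) = smS (ip x y) s + smS (ip x y) s - gam y (gam x s)"
proof -
  have "gam x (gam x s) + gam x (gam y s) + (gam y (gam x s) + gam y (gam y s))
      = smS (ip x x) s + smS (ip x y) s + (smS (ip x y) s + smS (ip y y) s)"
    using gam_square [of "x + y" s]
    by (simp only: gam_add_left gam_add_right ip_add_left ip_add_right smS_add_left ip_sym [of y x] add.assoc)
      (simp only: add_ac)
  then show ?thesis by (simp add: gam_square algebra_simps)
qed

lemma skew_endo_trace_eq_0: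
  assumes "skew_endo smE ip B"
  shows "(\<Sum>j\<in>I. ip (B (fr j)) (dfr j)) = 0"
proof -
  interpret B: additive B
    using assms unfolding skew_endo_def by unfold_locales blast
  have B_scale: "B (smE f v) = smE f (B v)" and B_skew: "ip (B v) w = - ip v (B w)" for f v w
    using assms unfolding skew_endo_def by (simp_all add: eq_neg_iff_add_eq_0)
  let ?t = "\<Sum>j\<in>I. ip (B (fr j)) (dfr j)"
  have "(\<Sum>j\<in>I. ip (fr j) (B (dfr j)))
      = (\<Sum>j\<in>I. ip (fr j) (\<Sum>k\<in>I. smE (ip (dfr k) (B (dfr j))) (fr k)))"
    using dual_frame_expansion by simp
  also have "\<dots> = (\<Sum>k\<in>I. \<Sum>j\<in>I. ip (fr j) (fr k) * ip (dfr k) (B (dfr j)))"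
    by (subst sum.swap) (simp add: multilinear_simps mult.commute)
  also have "\<dots> = (\<Sum>k\<in>I. ip (dfr k) (B (\<Sum>j\<in>I. smE (ip (fr j) (fr k)) (dfr j))))"
    by (simp add: multilinear_simps B.sum B_scale)
  also have "\<dots> = ?t"
    using frame_expansion by (simp add: ip_sym)
  finally have "?t + ?t = 0"
    by (simp add: B_skew sum_negf)
  then show ?thesis by (rule double_eq_0_imp_eq_0)
qed

lemma gam_dual_frame_expansion:
  assumes "\<And>v w. B (v + w) = B v + B w" and "\<And>f v. B (smE f v) = smE f (B v)"
  shows "(\<Sum>i\<in>I. smS (ip (dfr i) x) (gam (B (fr i)) s)) = gam (B x) s"
proof -
  interpret B: additive B by unfold_locales (rule assms(1))
  show ?thesis
    using arg_cong [OF dual_frame_expansion, of "\<lambda>z. gam (B z) s" x]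
    by (simp add: multilinear_simps B.sum assms(2))
qed

lemma gam_skew_endo_expansion:
  assumes "skew_endo smE ip B"
  shows "(\<Sum>j\<in>I. smS (ip (B (fr j)) a) (gam (dfr j) s)) = - gam (B a) s"
proof -
  have "ip (B v) a = - ip v (B a)" for v
    using assms unfolding skew_endo_def by (metis add_eq_0_iff2)
  then show ?thesis
    by (simp add: multilinear_simps sum_negf gam_frame_expansion)
qed

lemma gam_move_past_two:
  "gam x (gam y (gam a s)) = gam a (gam x (gam y s))
     - smS (ip x a) (gam y s) - smS (ip x a) (gam y s) + smS (ip y a) (gam x s) + smS (ip y a) (gam x s)"
proof -
  have "gam x (gam y (gam a s)) = smS (ip y a) (gam x s) + smS (ip y a) (gam x s) - gam x (gam a (gam y s))"
    by (subst gam_swap [of y a]) (simp add: multilinear_simps)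
  also have "gam x (gam a (gam y s))
      = smS (ip x a) (gam y s) + smS (ip x a) (gam y s) - gam a (gam x (gam y s))"
    by (rule gam_swap)
  finally show ?thesis by (simp add: algebra_simps)
qed

lemma cl2_add_right:
    "cl2 smS gam I fr dfr B (s1 + s2) = cl2 smS gam I fr dfr B s1 + cl2 smS gam I fr dfr B s2"
  and cl2_scale_right:
    "cl2 smS gam I fr dfr B (smS f s) = smS f (cl2 smS gam I fr dfr B s)"
  and cl2_add_endo:
    "cl2 smS gam I fr dfr (\<lambda>v. B1 v + B2 v) s = cl2 smS gam I fr dfr B1 s + cl2 smS gam I fr dfr B2 s"
  and cl2_scale_endo:
    "cl2 smS gam I fr dfr (\<lambda>v. smE f (B v)) s = smS f (cl2 smS gam I fr dfr B s)"
  unfolding cl2_def by (simp_all add: multilinear_simps sum_subtractf sum.distrib smS_commute algebra_simps)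

lemma cl2_gam_commutator:
  assumes "skew_endo smE ip B"
  shows "cl2 smS gam I fr dfr B (gam a s) - gam a (cl2 smS gam I fr dfr B s)
    = - (gam (B a) s + gam (B a) s)"
proof -
  define q where "q = smS (of_real (1/4))"
  define g where "g = gam (B a) s"
  define s1 where "s1 = (\<lambda>j. smS (ip (B (fr j)) a) (gam (dfr j) s))"
  define s2 where "s2 = (\<lambda>j. smS (ip (dfr j) a) (gam (B (fr j)) s))"
  have sum_s1: "(\<Sum>j\<in>I. s1 j) = - g"
    unfolding s1_def g_def using assms by (rule gam_skew_endo_expansion)
  have sum_s2: "(\<Sum>j\<in>I. s2 j) = g"
    unfolding s2_def g_def using assms unfolding skew_endo_def by (intro gam_dual_frame_expansion) blast+
  have "cl2 smS gam I fr dfr B (gam a s) - gam a (cl2 smS gam I fr dfr B s)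
     = q (\<Sum>j\<in>I. (gam (dfr j) (gam (B (fr j)) (gam a s)) - gam (B (fr j)) (gam (dfr j) (gam a s)))
         - (gam a (gam (dfr j) (gam (B (fr j)) s)) - gam a (gam (B (fr j)) (gam (dfr j) s))))"
    unfolding cl2_def q_def by (simp add: multilinear_simps sum_subtractf sum.distrib algebra_simps)
  also have "\<dots> = q (\<Sum>j\<in>I. (s1 j + s1 j + s1 j + s1 j) - (s2 j + s2 j + s2 j + s2 j))"
    unfolding s1_def s2_def
    by (rule arg_cong [where f = q], rule sum.cong [OF refl],
        simp only: gam_move_past_two [of "dfr _" "B (fr _)"] gam_move_past_two [of "B (fr _)" "dfr _"],
        simp add: ip_sym algebra_simps)
  also have "\<dots> = - (q (g + g + g + g) + q (g + g + g + g))"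
    by (simp add: sum.distrib sum_subtractf sum_s1 sum_s2 q_def multilinear_simps algebra_simps)
  also have "q (g + g + g + g) = g"
    unfolding q_def by (simp add: smS_add_right smS_of_real_add smS_one)
  finally show ?thesis unfolding g_def .
qed

context
  fixes A :: "'e \<Rightarrow> 'e \<Rightarrow> 'e"
  assumes so: "so_valued smE ip A"
begin

lemma A_add_left: "A (u1 + u2) v = A u1 v + A u2 v"
  and A_scale_left: "A (smE f u) v = smE f (A u v)"
  and A_add_right: "A u (v1 + v2) = A u v1 + A u v2"
  and A_scale_right: "A u (smE f v) = smE f (A u v)"
  using so unfolding so_valued_def by blast+

lemma A_skew: "ip (A u v) w = - ip v (A u w)"
  using so by (simp add: so_valued_def eq_neg_iff_add_eq_0)

lemma smS_trace_A_eq_0: "(\<Sum>j\<in>I. smS (ip (A u (fr j)) (dfr j)) t) = 0"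
  using skew_endo_trace_eq_0 [OF so_valued_imp_skew_endo [OF so]]
  by (simp add: smS_left.zero flip: smS_left.sum)

lemma sum_gam_A_middle:
  "(\<Sum>i\<in>I. \<Sum>j\<in>I. gam (dfr i) (gam (A (fr i) (fr j)) (gam (dfr j) s)))
     = - (\<Sum>i\<in>I. \<Sum>j\<in>I. gam (dfr i) (gam (dfr j) (gam (A (fr i) (fr j)) s)))"
proof -
  have "gam (dfr i) (gam (A (fr i) (fr j)) (gam (dfr j) s)) =
     smS (ip (A (fr i) (fr j)) (dfr j)) (gam (dfr i) s) + smS (ip (A (fr i) (fr j)) (dfr j)) (gam (dfr i) s)
     - gam (dfr i) (gam (dfr j) (gam (A (fr i) (fr j)) s))" for i j
    by (subst gam_swap) (simp add: multilinear_simps)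
  then show ?thesis
    by (simp add: sum.distrib sum_subtractf smS_trace_A_eq_0 sum_negf)
qed

lemma sum_gam_A_first:
  "(\<Sum>i\<in>I. \<Sum>j\<in>I. gam (A (fr i) (fr j)) (gam (dfr i) (gam (dfr j) s)))
     = (\<Sum>i\<in>I. \<Sum>j\<in>I. gam (dfr i) (gam (dfr j) (gam (A (fr i) (fr j)) s)))
       - (gam (trace_A I fr dfr A) s + gam (trace_A I fr dfr A) s)"
proof -
  have swap: "gam (A (fr i) (fr j)) (gam (dfr i) (gam (dfr j) s)) =
     smS (ip (A (fr i) (fr j)) (dfr i)) (gam (dfr j) s) + smS (ip (A (fr i) (fr j)) (dfr i)) (gam (dfr j) s)
     - gam (dfr i) (gam (A (fr i) (fr j)) (gam (dfr j) s))" for i j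
    by (subst gam_swap) (simp add: multilinear_simps)
  have contract:
    "(\<Sum>j\<in>I. smS (ip (A (fr i) (fr j)) (dfr i)) (gam (dfr j) s)) = - gam (A (fr i) (dfr i)) s" for i
    by (simp add: A_skew multilinear_simps sum_negf gam_frame_expansion)
  show ?thesis
    unfolding trace_A_def
    by (simp add: swap sum.distrib sum_subtractf contract sum_negf multilinear_simps sum_gam_A_middle)
qed

lemma sum_gam_A_last:
  "(\<Sum>i\<in>I. \<Sum>k\<in>I. gam (dfr i) (gam (A (fr k) (fr i)) (gam (dfr k) s)))
     = (\<Sum>i\<in>I. \<Sum>j\<in>I. gam (dfr i) (gam (dfr j) (gam (A (fr i) (fr j)) s)))
       - (gam (trace_A I fr dfr A) s + gam (trace_A I fr dfr A) s
          + gam (trace_A I fr dfr A) s + gam (trace_A I fr dfr A) s)"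
proof -
  define V where "V = gam (trace_A I fr dfr A) s"
  define W' where "W' = (\<Sum>k\<in>I. \<Sum>i\<in>I. gam (A (fr k) (fr i)) (gam (dfr i) (gam (dfr k) s)))"
  have swap_middle: "gam (dfr i) (gam (A (fr k) (fr i)) (gam (dfr k) s)) =
     smS (ip (A (fr k) (fr i)) (dfr i)) (gam (dfr k) s) + smS (ip (A (fr k) (fr i)) (dfr i)) (gam (dfr k) s)
     - gam (A (fr k) (fr i)) (gam (dfr i) (gam (dfr k) s))" for i k
    by (subst gam_swap) (simp add: multilinear_simps ip_sym)
  have W_eq: "(\<Sum>i\<in>I. \<Sum>k\<in>I. gam (dfr i) (gam (A (fr k) (fr i)) (gam (dfr k) s))) = - W'"
    unfolding W'_def
    by (subst sum.swap) (simp add: swap_middle sum.distrib sum_subtractf smS_trace_A_eq_0 sum_negf)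
  have swap_last: "gam (A (fr k) (fr i)) (gam (dfr i) (gam (dfr k) s)) =
     smS (ip (dfr i) (dfr k)) (gam (A (fr k) (fr i)) s) + smS (ip (dfr i) (dfr k)) (gam (A (fr k) (fr i)) s)
     - gam (A (fr k) (fr i)) (gam (dfr k) (gam (dfr i) s))" for i k
    by (subst (2) gam_swap) (simp add: multilinear_simps)
  have W'_eq: "W' = V + V - (\<Sum>k\<in>I. \<Sum>i\<in>I. gam (A (fr k) (fr i)) (gam (dfr k) (gam (dfr i) s)))"
    unfolding W'_def V_def trace_A_def
    by (simp add: swap_last sum.distrib sum_subtractf multilinear_simps
        gam_dual_frame_expansion A_add_right A_scale_right)
  show ?thesis
    unfolding W_eq W'_eq V_def by (simp add: sum_gam_A_first algebra_simps)
qed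

lemma cl3_cyclic_form_A:
  "cl3 smS gam I fr dfr (cyclic_form ip A) s
     = smS (of_real (1/2)) (\<Sum>i\<in>I. \<Sum>j\<in>I. gam (dfr i) (gam (dfr j) (gam (A (fr i) (fr j)) s)))
       - gam (trace_A I fr dfr A) s"
proof -
  define X where "X = (\<Sum>i\<in>I. \<Sum>j\<in>I. gam (dfr i) (gam (dfr j) (gam (A (fr i) (fr j)) s)))"
  define V where "V = gam (trace_A I fr dfr A) s"
  define g where "g = (\<lambda>i j k. gam (dfr i) (gam (dfr j) (gam (dfr k) s)))"
  have expand0: "(\<Sum>k\<in>I. smS (ip x (fr k)) (gam (dfr k) t)) = gam x t" for x t
    using gam_frame_expansion_under [where L = "\<lambda>t. t"] by simp
  have expand1: "(\<Sum>k\<in>I. smS (ip x (fr k)) (gam a (gam (dfr k) t))) = gam a (gam x t)" for x a t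
    by (rule gam_frame_expansion_under) (simp_all add: multilinear_simps)
  have expand2: "(\<Sum>k\<in>I. smS (ip x (fr k)) (gam a (gam b (gam (dfr k) t)))) = gam a (gam b (gam x t))"
    for x a b t
    by (rule gam_frame_expansion_under [where L = "\<lambda>t. gam a (gam b t)"]) (simp_all add: multilinear_simps)
  have T1: "(\<Sum>i\<in>I. \<Sum>j\<in>I. \<Sum>k\<in>I. smS (ip (A (fr i) (fr j)) (fr k)) (g i j k)) = X"
    unfolding X_def g_def by (simp add: expand2)
  have T2: "(\<Sum>i\<in>I. \<Sum>j\<in>I. \<Sum>k\<in>I. smS (ip (A (fr j) (fr k)) (fr i)) (g i j k)) = X - (V + V)"
  proof -
    have "(\<Sum>i\<in>I. \<Sum>j\<in>I. \<Sum>k\<in>I. smS (ip (A (fr j) (fr k)) (fr i)) (g i j k))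
        = (\<Sum>j\<in>I. \<Sum>k\<in>I. \<Sum>i\<in>I. smS (ip (A (fr j) (fr k)) (fr i)) (g i j k))"
      by (subst sum.swap) (rule sum.cong [OF refl], rule sum.swap)
    also have "\<dots> = (\<Sum>j\<in>I. \<Sum>k\<in>I. gam (A (fr j) (fr k)) (gam (dfr j) (gam (dfr k) s)))"
      unfolding g_def by (simp add: expand0 multilinear_simps)
    finally show ?thesis unfolding X_def V_def by (simp add: sum_gam_A_first)
  qed
  have T3: "(\<Sum>i\<in>I. \<Sum>j\<in>I. \<Sum>k\<in>I. smS (ip (A (fr k) (fr i)) (fr j)) (g i j k)) = X - (V + V + V + V)"
  proof -
    have "(\<Sum>i\<in>I. \<Sum>j\<in>I. \<Sum>k\<in>I. smS (ip (A (fr k) (fr i)) (fr j)) (g i j k))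
        = (\<Sum>i\<in>I. \<Sum>k\<in>I. \<Sum>j\<in>I. smS (ip (A (fr k) (fr i)) (fr j)) (g i j k))"
      by (rule sum.cong [OF refl], rule sum.swap)
    also have "\<dots> = (\<Sum>i\<in>I. \<Sum>k\<in>I. gam (dfr i) (gam (A (fr k) (fr i)) (gam (dfr k) s)))"
      unfolding g_def by (simp add: expand1)
    finally show ?thesis unfolding X_def V_def by (simp add: sum_gam_A_last)
  qed
  have "cl3 smS gam I fr dfr (cyclic_form ip A) s
      = smS (of_real (1/6)) ((\<Sum>i\<in>I. \<Sum>j\<in>I. \<Sum>k\<in>I. smS (ip (A (fr i) (fr j)) (fr k)) (g i j k))
          + (\<Sum>i\<in>I. \<Sum>j\<in>I. \<Sum>k\<in>I. smS (ip (A (fr j) (fr k)) (fr i)) (g i j k))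
          + (\<Sum>i\<in>I. \<Sum>j\<in>I. \<Sum>k\<in>I. smS (ip (A (fr k) (fr i)) (fr j)) (g i j k)))"
    unfolding cl3_def cyclic_form_def g_def by (simp add: smS_add_left sum.distrib)
  also have "\<dots> = smS (of_real (1/6)) ((X + X + X) - (V + V + V + V + V + V))"
    unfolding T1 T2 T3 by (simp add: algebra_simps)
  also have "\<dots> = smS (of_real (1/2)) X - V"
    by (simp add: smS_right.diff smS_add_right smS_of_real_add smS_one)
  finally show ?thesis unfolding X_def V_def .
qed

lemma sum_gam_cl2_A:
  "(\<Sum>i\<in>I. gam (dfr i) (cl2 smS gam I fr dfr (A (fr i)) s))
     = cl3 smS gam I fr dfr (cyclic_form ip A) s + gam (trace_A I fr dfr A) s"
proof -
  define X where "X = (\<Sum>i\<in>I. \<Sum>j\<in>I. gam (dfr i) (gam (dfr j) (gam (A (fr i) (fr j)) s)))"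
  have "(\<Sum>i\<in>I. gam (dfr i) (cl2 smS gam I fr dfr (A (fr i)) s))
      = smS (of_real (1/4)) (X - (\<Sum>i\<in>I. \<Sum>j\<in>I. gam (dfr i) (gam (A (fr i) (fr j)) (gam (dfr j) s))))"
    unfolding cl2_def X_def by (simp add: multilinear_simps sum_subtractf)
  also have "\<dots> = smS (of_real (1/2)) X"
    unfolding sum_gam_A_middle X_def [symmetric]
    by (simp add: smS_add_right smS_of_real_add)
  finally show ?thesis
    unfolding cl3_cyclic_form_A X_def by simp
qed

lemma E_connection_shift:
  assumes "E_connection smE anc smS DS"
  shows "E_connection smE anc smS (\<lambda>e s. DS e s - smS (of_real (1/2)) (cl2 smS gam I fr dfr (A e) s))"
proof -
  have "A (e1 + e2) = (\<lambda>v. A e1 v + A e2 v)" and "A (smE f e) = (\<lambda>v. smE f (A e v))" for e1 e2 f e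
    by (simp_all add: fun_eq_iff A_add_left A_scale_left)
  with assms show ?thesis
    unfolding E_connection_def
    by (simp add: cl2_add_endo cl2_scale_endo cl2_add_right cl2_scale_right multilinear_simps
        smS_commute algebra_simps)
qed

lemma compatible_shift:
  assumes "compatible gam D DS"
  shows "compatible gam (\<lambda>u v. D u v + A u v)
    (\<lambda>e s. DS e s - smS (of_real (1/2)) (cl2 smS gam I fr dfr (A e) s))"
  unfolding compatible_def
proof (intro allI)
  fix e a s
  let ?h = "smS (of_real (1/2))"
  have "cl2 smS gam I fr dfr (A e) (gam a s)
      = gam a (cl2 smS gam I fr dfr (A e) s) - (gam (A e a) s + gam (A e a) s)"
    using cl2_gam_commutator [OF so_valued_imp_skew_endo [OF so], of e a s] by (simp add: algebra_simps)
  then have "?h (cl2 smS gam I fr dfr (A e) (gam a s))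
      = gam a (?h (cl2 smS gam I fr dfr (A e) s)) - gam (A e a) s"
    by (simp only: smS_right.diff smS_half_double gam_scale_right)
  with assms show "DS e (gam a s) - ?h (cl2 smS gam I fr dfr (A e) (gam a s)) =
      gam (D e a + A e a) s + gam a (DS e s - ?h (cl2 smS gam I fr dfr (A e) s))"
    unfolding compatible_def by (simp add: multilinear_simps algebra_simps)
qed

lemma dirac_shift:
  "dirac smS gam I fr dfr (\<lambda>e s. DS e s - smS (of_real (1/2)) (cl2 smS gam I fr dfr (A e) s)) s
     = dirac smS gam I fr dfr DS s - smS (of_real (1/4)) (cl3 smS gam I fr dfr (cyclic_form ip A) s)
       - smS (of_real (1/4)) (gam (trace_A I fr dfr A) s)"
proof -
  let ?h = "smS (of_real (1/2))"
  have quarter: "?h (?h x) = smS (of_real (1/4)) x" for x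
    by (simp flip: smS_mult of_real_mult)
  have "(\<Sum>i\<in>I. gam (dfr i) (DS (fr i) s - ?h (cl2 smS gam I fr dfr (A (fr i)) s)))
      = (\<Sum>i\<in>I. gam (dfr i) (DS (fr i) s)) - ?h (\<Sum>i\<in>I. gam (dfr i) (cl2 smS gam I fr dfr (A (fr i)) s))"
    by (simp add: multilinear_simps sum_subtractf)
  then show ?thesis
    unfolding dirac_def by (simp only: smS_right.diff quarter sum_gam_cl2_A smS_add_right diff_diff_eq)
qed

end

end

theorem proposition8p1:
  fixes smE :: "'r::{comm_ring_1,real_algebra_1} \<Rightarrow> 'e::ab_group_add \<Rightarrow> 'e"
    and anc :: "'e \<Rightarrow> 'r \<Rightarrow> 'r"
    and ip :: "'e \<Rightarrow> 'e \<Rightarrow> 'r"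
    and br :: "'e \<Rightarrow> 'e \<Rightarrow> 'e"
    and smS :: "'r \<Rightarrow> 's::ab_group_add \<Rightarrow> 's"
    and gam :: "'e \<Rightarrow> 's \<Rightarrow> 's"
    and I :: "'i set" and fr dfr :: "'i \<Rightarrow> 'e"
    and D A :: "'e \<Rightarrow> 'e \<Rightarrow> 'e"
    and DS :: "'e \<Rightarrow> 's \<Rightarrow> 's"
  assumes "courant_algebroid smE anc ip br"
    and "clifford_module smE ip smS gam"
    and "dual_system smE ip I fr dfr"
    and "gen_connection smE anc ip D"
    and "so_valued smE ip A"
    and "E_connection smE anc smS DS"
    and "compatible gam D DS"
  defines "D' \<equiv> (\<lambda>u v. D u v + A u v)"
    and "DS' \<equiv> (\<lambda>e s. DS e s - smS (of_real (1/2)) (cl2 smS gam I fr dfr (A e) s))"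
    and "\<alpha> \<equiv> cyclic_form ip A"
    and "vA \<equiv> trace_A I fr dfr A"
  shows "(\<forall>u v w. torsion ip br D' u v w = torsion ip br D u v w + \<alpha> u v w)
    \<and> (E_connection smE anc smS DS' \<and> compatible gam D' DS')
    \<and> (\<forall>s. dirac smS gam I fr dfr DS' s
           = dirac smS gam I fr dfr DS s - smS (of_real (1/4)) (cl3 smS gam I fr dfr \<alpha> s)
             - smS (of_real (1/4)) (gam vA s))
    \<and> (\<forall>s. dirac smS gam I fr dfr DS' s + smS (of_real (1/4)) (cl3 smS gam I fr dfr (torsion ip br D') s)
           = (dirac smS gam I fr dfr DS s + smS (of_real (1/4)) (cl3 smS gam I fr dfr (torsion ip br D) s))
             - smS (of_real (1/4)) (gam vA s))"
proof -
  interpret clifford_frame smE ip smS gam I fr dfr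
    using assms(1-3) unfolding courant_algebroid_def by unfold_locales blast+
  have torsion: "torsion ip br D' = (\<lambda>u v w. torsion ip br D u v w + \<alpha> u v w)"
    unfolding D'_def \<alpha>_def using scalar_product assms(5) by (intro ext) (rule torsion_add_so_valued)
  have dirac: "dirac smS gam I fr dfr DS' s
      = dirac smS gam I fr dfr DS s - smS (of_real (1/4)) (cl3 smS gam I fr dfr \<alpha> s)
        - smS (of_real (1/4)) (gam vA s)" for s
    unfolding DS'_def \<alpha>_def vA_def using assms(5) by (rule dirac_shift)
  have "module_ax smS"
    using assms(2) unfolding clifford_module_def by blast
  then show ?thesis
    using E_connection_shift [OF assms(5,6)] compatible_shift [OF assms(5,7)]
    unfolding D'_def [symmetric] DS'_def [symmetric]
    by (simp add: torsion dirac cl3_add smS_add_right algebra_simps)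
qed

end
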